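(* Let $C$ be a closed, regular cone with nonempty interior in a real Banach space. Let $f:\operatorname{int}C\to\operatorname{int}C$ be order-preserving and subhomogeneous. Then the limit $f_\infty(x)=\lim_{t\to\infty}t^{-1}f(tx)$ exists for every $x\in\operatorname{int}C$, the map $f_\infty:\operatorname{int}C\to C$ is order-preserving and homogeneous, and $r(f)=r(f_\infty)$.
   Context: A closed cone $C$ (closed convex, $\lambda C\subseteq C$ for $\lambda\ge0$, $C\cap(-C)=\{0\}$) induces the order $x\le y$ iff $y-x\in C$; $C$ is regular if every decreasing sequence in $C$ converges. $f$ is order-preserving if $x\le y\Rightarrow f(x)\le f(y)$; homogeneous if $f(tx)=tf(x)$ for all $t>0$; subhomogeneous if $f(tx)\le tf(x)$ for all $t\ge1$. For $g:\operatorname{int}C\to C$, $r(g)=\inf_{x\in\operatorname{int}C}M(g(x)/x)$ where $M(x/y)=\inf\{\beta>0:x\le\beta y\}$. *)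

theory Defs
  imports "HOL-Analysis.Analysis"
begin

definition closed_cone :: "'a::real_normed_vector set \<Rightarrow> bool" where
  "closed_cone C \<longleftrightarrow> closed C \<and> convex C \<and> C \<noteq> {} \<and>
     (\<forall>c::real. \<forall>x\<in>C. c \<ge> 0 \<longrightarrow> c *\<^sub>R x \<in> C) \<and>
     C \<inter> uminus ` C = {0}"

definition cone_le :: "'a::real_normed_vector set \<Rightarrow> 'a \<Rightarrow> 'a \<Rightarrow> bool" where
  "cone_le C x y \<longleftrightarrow> y - x \<in> C"

definition regular_cone :: "'a::real_normed_vector set \<Rightarrow> bool" where
  "regular_cone C \<longleftrightarrow> (\<forall>s::nat \<Rightarrow> 'a. (\<forall>n. s n \<in> C) \<and> (\<forall>n. cone_le C (s (Suc n)) (s n))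
      \<longrightarrow> convergent s)"

definition order_preserving_on :: "'a::real_normed_vector set \<Rightarrow> 'a set \<Rightarrow> ('a \<Rightarrow> 'a) \<Rightarrow> bool" where
  "order_preserving_on C D f \<longleftrightarrow> (\<forall>x\<in>D. \<forall>y\<in>D. cone_le C x y \<longrightarrow> cone_le C (f x) (f y))"

definition homogeneous_on :: "'a::real_normed_vector set \<Rightarrow> ('a \<Rightarrow> 'a) \<Rightarrow> bool" where
  "homogeneous_on D f \<longleftrightarrow> (\<forall>x\<in>D. \<forall>t::real. t > 0 \<longrightarrow> f (t *\<^sub>R x) = t *\<^sub>R f x)"

definition subhomogeneous_on :: "'a::real_normed_vector set \<Rightarrow> 'a set \<Rightarrow> ('a \<Rightarrow> 'a) \<Rightarrow> bool" where
  "subhomogeneous_on C D f \<longleftrightarrow> (\<forall>x\<in>D. \<forall>t::real. t \<ge> 1 \<longrightarrow> cone_le C (f (t *\<^sub>R x)) (t *\<^sub>R f x))"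

definition Mfun :: "'a::real_normed_vector set \<Rightarrow> 'a \<Rightarrow> 'a \<Rightarrow> real" where
  "Mfun C x y = Inf {\<beta>::real. \<beta> > 0 \<and> cone_le C x (\<beta> *\<^sub>R y)}"

definition cone_spectral_radius :: "'a::real_normed_vector set \<Rightarrow> ('a \<Rightarrow> 'a) \<Rightarrow> real" where
  "cone_spectral_radius C g = Inf ((\<lambda>x. Mfun C (g x) x) ` interior C)"

definition asymptotic_map :: "('a::real_normed_vector \<Rightarrow> 'a) \<Rightarrow> 'a \<Rightarrow> 'a" where
  "asymptotic_map f x = Lim at_top (\<lambda>t::real. inverse t *\<^sub>R f (t *\<^sub>R x))"

end

theory Submission
  imports Defs
begin

text \<open>Subhomogeneity makes \<open>t \<mapsto> f(t x) / t\<close> decreasing on \<open>(0, \<infinity>)\<close> with values in \<open>C\<close>,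
  so regularity of \<open>C\<close> yields the limit \<open>f\<^sub>\<infinity>(x)\<close>, which lies below every \<open>f(t x) / t\<close>.
  Order preservation and homogeneity pass to the limit because \<open>C\<close> is closed.
  Since \<open>f\<^sub>\<infinity> \<le> f\<close> we get \<open>r(f\<^sub>\<infinity>) \<le> r(f)\<close>. Conversely, if \<open>f\<^sub>\<infinity>(x) \<le> \<beta> x\<close>, then for large \<open>t\<close>
  the interior point \<open>x\<close> absorbs the error \<open>f(t x) / t - f\<^sub>\<infinity>(x)\<close>, giving
  \<open>f(t x) \<le> (\<beta> + \<epsilon>) t x\<close> and hence \<open>r(f) \<le> M(f\<^sub>\<infinity>(x) / x) + \<epsilon>\<close>.\<close>

lemma closed_cone_scaleR: "closed_cone C \<Longrightarrow> 0 \<le> c \<Longrightarrow> x \<in> C \<Longrightarrow> c *\<^sub>R x \<in> C"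
  unfolding closed_cone_def by blast

lemma closed_cone_add:
  assumes "closed_cone C" "x \<in> C" "y \<in> C"
  shows "x + y \<in> C"
proof -
  have "(1/2) *\<^sub>R x + (1/2) *\<^sub>R y \<in> C"
    using assms unfolding closed_cone_def by (intro convexD) auto
  then have "2 *\<^sub>R ((1/2) *\<^sub>R x + (1/2) *\<^sub>R y) \<in> C"
    using closed_cone_scaleR[OF assms(1)] by simp
  then show ?thesis by (simp add: scaleR_right_distrib)
qed

lemma cone_le_trans: "closed_cone C \<Longrightarrow> cone_le C x y \<Longrightarrow> cone_le C y z \<Longrightarrow> cone_le C x z"
  unfolding cone_le_def using closed_cone_add[of C "z - y" "y - x"] by simp

lemma cone_le_antisym:
  assumes "closed_cone C" "cone_le C x y" "cone_le C y x"
  shows "x = y"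
proof -
  have "y - x \<in> C \<inter> uminus ` C"
    using assms(2,3) unfolding cone_le_def by (auto intro: image_eqI[of _ _ "x - y"])
  then show ?thesis using assms(1) unfolding closed_cone_def by auto
qed

lemma cone_le_scaleR: "closed_cone C \<Longrightarrow> 0 \<le> c \<Longrightarrow> cone_le C x y \<Longrightarrow> cone_le C (c *\<^sub>R x) (c *\<^sub>R y)"
  unfolding cone_le_def using closed_cone_scaleR[of C c "y - x"]
  by (simp add: scaleR_right_diff_distrib)

lemma cone_le_tendsto:
  assumes "closed_cone C" "(u \<longlongrightarrow> a) F" "(v \<longlongrightarrow> b) F" "F \<noteq> bot"
    and "eventually (\<lambda>y. cone_le C (u y) (v y)) F"
  shows "cone_le C a b"
proof -
  have "closed C" using assms(1) by (simp add: closed_cone_def)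
  moreover have "((\<lambda>y. v y - u y) \<longlongrightarrow> b - a) F" by (intro tendsto_intros assms(2,3))
  ultimately show ?thesis
    unfolding cone_le_def by (rule Lim_in_closed_set[OF _ assms(5)[unfolded cone_le_def] assms(4)])
qed

lemma interior_cone_scaleR:
  assumes "closed_cone C" "x \<in> interior C" "0 < t"
  shows "t *\<^sub>R x \<in> interior C"
proof -
  have "(\<lambda>y. t *\<^sub>R y) ` interior C \<subseteq> interior C"
    using assms(1,3) interior_subset
    by (intro interior_maximal open_scaling) (auto intro!: closed_cone_scaleR)
  then show ?thesis using assms(2) by blast
qed

lemma eventually_cone_le_interior:
  assumes "closed_cone C" "x \<in> interior C" "0 < e" "(h \<longlongrightarrow> 0) F"
  shows "eventually (\<lambda>y. cone_le C (h y) (e *\<^sub>R x)) F"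
proof -
  have "((\<lambda>y. e *\<^sub>R x - h y) \<longlongrightarrow> e *\<^sub>R x) F"
    using tendsto_diff[OF tendsto_const assms(4)] by simp
  then have "eventually (\<lambda>y. e *\<^sub>R x - h y \<in> interior C) F"
    using interior_cone_scaleR[OF assms(1-3)] by (intro topological_tendstoD) auto
  then show ?thesis
    unfolding cone_le_def by eventually_elim (use interior_subset in blast)
qed

lemma cone_le_interior_multiple:
  assumes "closed_cone C" "x \<in> interior C"
  obtains \<beta> where "0 < \<beta>" "cone_le C v (\<beta> *\<^sub>R x)"
proof -
  have "((\<lambda>s::real. s *\<^sub>R v) \<longlongrightarrow> 0) (at_right 0)"
    by (intro tendsto_eq_intros) auto
  then have "eventually (\<lambda>s. cone_le C (s *\<^sub>R v) (1 *\<^sub>R x)) (at_right 0)"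
    by (rule eventually_cone_le_interior[OF assms zero_less_one])
  moreover have "eventually (\<lambda>s. 0 < s) (at_right (0::real))"
    by (rule eventually_at_right_less)
  ultimately have "eventually (\<lambda>s. 0 < s \<and> cone_le C (s *\<^sub>R v) x) (at_right 0)"
    by eventually_elim simp
  then obtain s where s: "0 < s" "cone_le C (s *\<^sub>R v) x"
    using eventually_happens'[OF trivial_limit_at_right_real] by blast
  then have "cone_le C (inverse s *\<^sub>R (s *\<^sub>R v)) (inverse s *\<^sub>R x)"
    by (intro cone_le_scaleR[OF assms(1)]) auto
  then show ?thesis using s(1) by (intro that[of "inverse s"]) auto
qed

lemma tendsto_at_top_if_tendsto_along_incseq:
  fixes g :: "real \<Rightarrow> 'b::metric_space"
  assumes "\<And>u. incseq u \<Longrightarrow> (\<And>n. a \<le> u n) \<Longrightarrow> filterlim u at_top sequentially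
             \<Longrightarrow> (\<lambda>n. g (u n)) \<longlonglongrightarrow> L"
  shows "(g \<longlongrightarrow> L) at_top"
proof (rule ccontr)
  assume "\<not> (g \<longlongrightarrow> L) at_top"
  then obtain e where "0 < e" and "\<forall>N. \<exists>t\<ge>N. e \<le> dist (g t) L"
    unfolding tendsto_iff eventually_at_top_linorder by (auto simp: not_less)
  then obtain pick where pick_ge: "\<And>N. N \<le> pick N" and pick_far: "\<And>N. e \<le> dist (g (pick N)) L"
    by metis
  define u where "u = rec_nat (pick a) (\<lambda>_ t. pick (t + 1))"
  have u_Suc: "u (Suc n) = pick (u n + 1)" for n by (simp add: u_def)
  have u_far: "e \<le> dist (g (u n)) L" for n
    by (cases n) (simp_all add: u_def pick_far)
  have u_step: "u n + 1 \<le> u (Suc n)" for n using pick_ge[of "u n + 1"] by (simp add: u_Suc)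
  then have "incseq u" by (intro incseq_SucI order.trans[OF _ u_step]) simp
  have u_ge: "a + real n \<le> u n" for n
  proof (induction n)
    case 0
    then show ?case using pick_ge[of a] by (simp add: u_def)
  next
    case (Suc n)
    then show ?case using u_step[of n] by simp
  qed
  have "filterlim (\<lambda>n. a + real n) at_top sequentially"
    by (rule filterlim_tendsto_add_at_top[OF tendsto_const filterlim_real_sequentially])
  then have "filterlim u at_top sequentially"
    by (rule filterlim_at_top_mono) (use u_ge in simp)
  moreover have "a \<le> u n" for n using u_ge[of n] by simp
  ultimately have "(\<lambda>n. g (u n)) \<longlonglongrightarrow> L" using \<open>incseq u\<close> by (intro assms)
  then have "eventually (\<lambda>n. dist (g (u n)) L < e) sequentially"
    using \<open>0 < e\<close> by (rule tendstoD)
  then obtain n where "dist (g (u n)) L < e"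
    using eventually_happens'[OF trivial_limit_sequentially] by blast
  with u_far[of n] show False by simp
qed

lemma antimono_limit_cone_le:
  fixes g :: "real \<Rightarrow> 'a::real_normed_vector"
  assumes "closed_cone C" and antimono: "\<And>s t. a \<le> s \<Longrightarrow> s \<le> t \<Longrightarrow> cone_le C (g t) (g s)"
    and "((\<lambda>y. g (u y)) \<longlongrightarrow> L) F" "filterlim u at_top F" "F \<noteq> bot" "a \<le> t"
  shows "cone_le C L (g t)"
proof -
  have "eventually (\<lambda>y. t \<le> u y) F" using assms(4) unfolding filterlim_at_top by blast
  then have "eventually (\<lambda>y. cone_le C (g (u y)) (g t)) F"
    by eventually_elim (use antimono assms(6) in blast)
  then show ?thesis by (rule cone_le_tendsto[OF assms(1,3) tendsto_const assms(5)])
qed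

text \<open>Regularity only controls sequences, and without normality of \<open>C\<close> the sandwich
  \<open>L \<le> g t \<le> g s\<close> gives no norm estimate; instead all increasing sequences tending to
  infinity are shown to produce the same limit.\<close>
lemma regular_cone_antimono_tendsto:
  fixes g :: "real \<Rightarrow> 'a::real_normed_vector"
  assumes cone: "closed_cone C" and "regular_cone C"
    and antimono: "\<And>s t. a \<le> s \<Longrightarrow> s \<le> t \<Longrightarrow> cone_le C (g t) (g s)"
    and in_cone: "\<And>t. a \<le> t \<Longrightarrow> g t \<in> C"
  shows "\<exists>L. (g \<longlongrightarrow> L) at_top"
proof -
  have convergent: "convergent (\<lambda>n. g (u n))" if "incseq u" "\<And>n. a \<le> u n" for u
  proof -
    have "(\<forall>n. g (u n) \<in> C) \<and> (\<forall>n. cone_le C (g (u (Suc n))) (g (u n)))"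
      using that antimono in_cone incseq_SucD[OF that(1)] by blast
    then show ?thesis
      using \<open>regular_cone C\<close> unfolding regular_cone_def by (elim allE[of _ "\<lambda>n. g (u n)"]) blast
  qed
  define v where "v n = a + real n" for n
  have "incseq v" by (simp add: v_def incseq_def)
  moreover have v_ge: "a \<le> v n" for n by (simp add: v_def)
  ultimately obtain L where L: "(\<lambda>n. g (v n)) \<longlonglongrightarrow> L"
    using convergent unfolding convergent_def by blast
  have v_at_top: "filterlim v at_top sequentially" unfolding v_def
    by (rule filterlim_tendsto_add_at_top[OF tendsto_const filterlim_real_sequentially])
  have along_incseq: "(\<lambda>n. g (u n)) \<longlonglongrightarrow> L"
    if u: "incseq u" "\<And>n. a \<le> u n" "filterlim u at_top sequentially" for u
  proof -
    obtain L' where L': "(\<lambda>n. g (u n)) \<longlonglongrightarrow> L'"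
      using convergent[OF u(1,2)] unfolding convergent_def by blast
    have "cone_le C L' L"
      using antimono_limit_cone_le[OF cone antimono L' u(3) _ v_ge]
      by (intro cone_le_tendsto[OF cone tendsto_const L]) auto
    moreover have "cone_le C L L'"
      using antimono_limit_cone_le[OF cone antimono L v_at_top _ u(2)]
      by (intro cone_le_tendsto[OF cone tendsto_const L']) auto
    ultimately show ?thesis using L' cone_le_antisym[OF cone] by metis
  qed
  have "(g \<longlongrightarrow> L) at_top" by (rule tendsto_at_top_if_tendsto_along_incseq[OF along_incseq])
  then show ?thesis ..
qed

lemma Mfun_le: "0 < \<beta> \<Longrightarrow> cone_le C v (\<beta> *\<^sub>R x) \<Longrightarrow> Mfun C v x \<le> \<beta>"
  unfolding Mfun_def by (rule cInf_lower) (auto intro!: bdd_belowI[of _ 0])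

lemma Mfun_nonneg: "closed_cone C \<Longrightarrow> x \<in> interior C \<Longrightarrow> 0 \<le> Mfun C v x"
  unfolding Mfun_def by (rule cInf_greatest) (auto elim: cone_le_interior_multiple)

lemma Mfun_mono:
  assumes "closed_cone C" "x \<in> interior C" "cone_le C u v"
  shows "Mfun C u x \<le> Mfun C v x"
  unfolding Mfun_def[of C v x]
  using cone_le_interior_multiple[OF assms(1,2), of v]
  by (intro cInf_greatest) (auto intro: Mfun_le cone_le_trans[OF assms(1,3)])

lemma Mfun_approx:
  assumes "closed_cone C" "x \<in> interior C" "0 < e"
  obtains \<beta> where "0 < \<beta>" "cone_le C v (\<beta> *\<^sub>R x)" "\<beta> < Mfun C v x + e"
proof -
  define B where "B = {\<beta>. 0 < \<beta> \<and> cone_le C v (\<beta> *\<^sub>R x)}"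
  have "B \<noteq> {}" unfolding B_def using cone_le_interior_multiple[OF assms(1,2)] by blast
  moreover have "Inf B < Mfun C v x + e" using assms(3) by (simp add: Mfun_def B_def)
  ultimately obtain \<beta> where "\<beta> \<in> B" "\<beta> < Mfun C v x + e" using cInf_lessD by blast
  then show ?thesis using that unfolding B_def by blast
qed

lemma cone_spectral_radius_bdd_below:
  "closed_cone C \<Longrightarrow> bdd_below ((\<lambda>x. Mfun C (g x) x) ` interior C)"
  by (rule bdd_belowI[of _ 0]) (auto intro: Mfun_nonneg)

lemma cone_spectral_radius_mono:
  assumes "closed_cone C" "interior C \<noteq> {}" "\<And>x. x \<in> interior C \<Longrightarrow> cone_le C (g x) (h x)"
  shows "cone_spectral_radius C g \<le> cone_spectral_radius C h"
  unfolding cone_spectral_radius_def using assms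
  by (intro cINF_mono cone_spectral_radius_bdd_below) (auto intro: Mfun_mono)

lemma cone_spectral_radius_le_approx:
  assumes "closed_cone C" "interior C \<noteq> {}"
    and approx: "\<And>x e. x \<in> interior C \<Longrightarrow> 0 < e
                   \<Longrightarrow> \<exists>y\<in>interior C. Mfun C (g y) y \<le> Mfun C (h x) x + e"
  shows "cone_spectral_radius C g \<le> cone_spectral_radius C h"
  unfolding cone_spectral_radius_def
proof (rule cINF_greatest[OF assms(2)])
  fix x assume x: "x \<in> interior C"
  show "(INF y\<in>interior C. Mfun C (g y) y) \<le> Mfun C (h x) x"
  proof (rule field_le_epsilon)
    fix e :: real assume "0 < e"
    then obtain y where "y \<in> interior C" "Mfun C (g y) y \<le> Mfun C (h x) x + e"
      using approx x by blast
    then show "(INF y\<in>interior C. Mfun C (g y) y) \<le> Mfun C (h x) x + e"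
      using cone_spectral_radius_bdd_below[OF assms(1)] by (meson cINF_lower order.trans)
  qed
qed

lemma asymptotic_map_scaleR:
  assumes "((\<lambda>t. inverse t *\<^sub>R f (t *\<^sub>R x)) \<longlongrightarrow> L) at_top" "0 < s"
  shows "asymptotic_map f (s *\<^sub>R x) = s *\<^sub>R L"
proof -
  have "filterlim (\<lambda>t. s * t) at_top at_top"
    by (rule filterlim_tendsto_pos_mult_at_top[OF tendsto_const assms(2) filterlim_ident])
  then have "((\<lambda>t. s *\<^sub>R (inverse (s * t) *\<^sub>R f ((s * t) *\<^sub>R x))) \<longlongrightarrow> s *\<^sub>R L) at_top"
    by (intro tendsto_scaleR tendsto_const filterlim_compose[OF assms(1)])
  moreover have "s *\<^sub>R (inverse (s * t) *\<^sub>R f ((s * t) *\<^sub>R x)) = inverse t *\<^sub>R f (t *\<^sub>R s *\<^sub>R x)" for t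
    using assms(2) by (simp add: mult.commute)
  ultimately show ?thesis
    unfolding asymptotic_map_def by (simp add: tendsto_Lim)
qed

locale order_preserving_subhomogeneous =
  fixes C :: "'a::real_normed_vector set" and f :: "'a \<Rightarrow> 'a"
  assumes cone: "closed_cone C" and regular: "regular_cone C"
    and maps_interior: "f ` interior C \<subseteq> interior C"
    and order_preserving: "order_preserving_on C (interior C) f"
    and subhomogeneous: "subhomogeneous_on C (interior C) f"
begin

lemma rescaled_antimono:
  assumes "x \<in> interior C" "0 < s" "s \<le> t"
  shows "cone_le C (inverse t *\<^sub>R f (t *\<^sub>R x)) (inverse s *\<^sub>R f (s *\<^sub>R x))"
proof -
  have eq: "(t / s) *\<^sub>R s *\<^sub>R x = t *\<^sub>R x" "inverse t * (t / s) = inverse s"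
    using assms(2,3) by (auto simp: inverse_eq_divide)
  have "s *\<^sub>R x \<in> interior C" by (rule interior_cone_scaleR[OF cone assms(1,2)])
  moreover have "1 \<le> t / s" using assms(2,3) by simp
  ultimately have "cone_le C (f ((t / s) *\<^sub>R s *\<^sub>R x)) ((t / s) *\<^sub>R f (s *\<^sub>R x))"
    using subhomogeneous unfolding subhomogeneous_on_def by blast
  then have "cone_le C (f (t *\<^sub>R x)) ((t / s) *\<^sub>R f (s *\<^sub>R x))"
    by (simp only: eq(1))
  then have "cone_le C (inverse t *\<^sub>R f (t *\<^sub>R x)) (inverse t *\<^sub>R (t / s) *\<^sub>R f (s *\<^sub>R x))"
    using assms(2,3) by (intro cone_le_scaleR[OF cone]) auto
  then show ?thesis by (simp only: scaleR_scaleR eq(2))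
qed

lemma rescaled_in_cone:
  assumes "x \<in> interior C" "0 < t"
  shows "inverse t *\<^sub>R f (t *\<^sub>R x) \<in> C"
proof -
  have "f (t *\<^sub>R x) \<in> interior C"
    using maps_interior interior_cone_scaleR[OF cone assms] by blast
  then show ?thesis using assms(2) interior_subset by (intro closed_cone_scaleR[OF cone]) auto
qed

lemma rescaled_converges: "x \<in> interior C \<Longrightarrow> \<exists>L. ((\<lambda>t. inverse t *\<^sub>R f (t *\<^sub>R x)) \<longlongrightarrow> L) at_top"
  by (rule regular_cone_antimono_tendsto[OF cone regular, where a = 1])
    (auto intro: rescaled_antimono rescaled_in_cone)

lemma tendsto_asymptotic_map:
  "x \<in> interior C \<Longrightarrow> ((\<lambda>t. inverse t *\<^sub>R f (t *\<^sub>R x)) \<longlongrightarrow> asymptotic_map f x) at_top"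
  using rescaled_converges unfolding asymptotic_map_def by (metis tendsto_Lim trivial_limit_at_top_linorder)

lemma asymptotic_map_le_rescaled:
  assumes "x \<in> interior C" "0 < t"
  shows "cone_le C (asymptotic_map f x) (inverse t *\<^sub>R f (t *\<^sub>R x))"
proof (rule antimono_limit_cone_le[where g = "\<lambda>s. inverse s *\<^sub>R f (s *\<^sub>R x)" and u = "\<lambda>s. s"])
  show "((\<lambda>s. inverse s *\<^sub>R f (s *\<^sub>R x)) \<longlongrightarrow> asymptotic_map f x) at_top"
    by (rule tendsto_asymptotic_map[OF assms(1)])
  show "cone_le C (inverse s' *\<^sub>R f (s' *\<^sub>R x)) (inverse s *\<^sub>R f (s *\<^sub>R x))"
    if "t \<le> s" "s \<le> s'" for s s'
    using that assms by (intro rescaled_antimono) auto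
qed (use cone filterlim_ident in auto)

lemma asymptotic_map_in_cone:
  assumes "x \<in> interior C"
  shows "asymptotic_map f x \<in> C"
proof -
  have "eventually (\<lambda>t. cone_le C 0 (inverse t *\<^sub>R f (t *\<^sub>R x))) at_top"
    using eventually_gt_at_top[of 0] by eventually_elim (simp add: cone_le_def rescaled_in_cone assms)
  then have "cone_le C 0 (asymptotic_map f x)"
    by (rule cone_le_tendsto[OF cone tendsto_const tendsto_asymptotic_map[OF assms] trivial_limit_at_top_linorder])
  then show ?thesis by (simp add: cone_le_def)
qed

lemma asymptotic_map_order_preserving: "order_preserving_on C (interior C) (asymptotic_map f)"
  unfolding order_preserving_on_def
proof (intro ballI impI)
  fix x y assume x: "x \<in> interior C" and y: "y \<in> interior C" and "cone_le C x y"
  have "eventually (\<lambda>t. cone_le C (inverse t *\<^sub>R f (t *\<^sub>R x)) (inverse t *\<^sub>R f (t *\<^sub>R y))) at_top"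
    using eventually_gt_at_top[of 0]
  proof eventually_elim
    case (elim t)
    then have "cone_le C (f (t *\<^sub>R x)) (f (t *\<^sub>R y))"
      using order_preserving x y \<open>cone_le C x y\<close> interior_cone_scaleR[OF cone] cone_le_scaleR[OF cone]
      unfolding order_preserving_on_def by (meson less_imp_le)
    then show ?case using elim by (intro cone_le_scaleR[OF cone]) auto
  qed
  then show "cone_le C (asymptotic_map f x) (asymptotic_map f y)"
    by (rule cone_le_tendsto[OF cone tendsto_asymptotic_map[OF x] tendsto_asymptotic_map[OF y]
          trivial_limit_at_top_linorder])
qed

lemma asymptotic_map_homogeneous: "homogeneous_on (interior C) (asymptotic_map f)"
  unfolding homogeneous_on_def by (blast intro: asymptotic_map_scaleR tendsto_asymptotic_map)

lemma Mfun_rescaled_approx: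
  assumes x: "x \<in> interior C" and "0 < e"
  obtains t where "0 < t" "Mfun C (f (t *\<^sub>R x)) (t *\<^sub>R x) \<le> Mfun C (asymptotic_map f x) x + e"
proof -
  obtain \<beta> where "0 < \<beta>" and \<beta>: "cone_le C (asymptotic_map f x) (\<beta> *\<^sub>R x)"
    and \<beta>_less: "\<beta> < Mfun C (asymptotic_map f x) x + e / 2"
    using Mfun_approx[OF cone x, of "e / 2"] \<open>0 < e\<close> by auto
  have "((\<lambda>t. inverse t *\<^sub>R f (t *\<^sub>R x) - asymptotic_map f x) \<longlongrightarrow> 0) at_top"
    using tendsto_diff[OF tendsto_asymptotic_map[OF x] tendsto_const[of "asymptotic_map f x"]] by simp
  then have "eventually (\<lambda>t. cone_le C (inverse t *\<^sub>R f (t *\<^sub>R x) - asymptotic_map f x)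
      ((e / 2) *\<^sub>R x)) at_top"
    using \<open>0 < e\<close> by (intro eventually_cone_le_interior[OF cone x]) auto
  moreover note eventually_gt_at_top[of 0]
  ultimately obtain t where "0 < t"
    and close: "cone_le C (inverse t *\<^sub>R f (t *\<^sub>R x) - asymptotic_map f x) ((e / 2) *\<^sub>R x)"
    using eventually_happens'[OF trivial_limit_at_top_linorder] eventually_conj by blast
  have "cone_le C (inverse t *\<^sub>R f (t *\<^sub>R x)) (asymptotic_map f x + (e / 2) *\<^sub>R x)"
    using close by (simp add: cone_le_def algebra_simps)
  moreover have "cone_le C (asymptotic_map f x + (e / 2) *\<^sub>R x) ((\<beta> + e / 2) *\<^sub>R x)"
    using \<beta> by (simp add: cone_le_def algebra_simps)
  ultimately have "cone_le C (inverse t *\<^sub>R f (t *\<^sub>R x)) ((\<beta> + e / 2) *\<^sub>R x)"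
    by (rule cone_le_trans[OF cone])
  then have "cone_le C (t *\<^sub>R inverse t *\<^sub>R f (t *\<^sub>R x)) (t *\<^sub>R (\<beta> + e / 2) *\<^sub>R x)"
    using \<open>0 < t\<close> by (intro cone_le_scaleR[OF cone]) auto
  then have "cone_le C (f (t *\<^sub>R x)) ((\<beta> + e / 2) *\<^sub>R (t *\<^sub>R x))"
    using \<open>0 < t\<close> by (simp add: mult.commute)
  then have "Mfun C (f (t *\<^sub>R x)) (t *\<^sub>R x) \<le> \<beta> + e / 2"
    using \<open>0 < \<beta>\<close> \<open>0 < e\<close> by (intro Mfun_le) auto
  then show ?thesis using \<beta>_less \<open>0 < t\<close> that by force
qed

lemma cone_spectral_radius_asymptotic_map:
  assumes "interior C \<noteq> {}"
  shows "cone_spectral_radius C f = cone_spectral_radius C (asymptotic_map f)"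
proof (rule antisym)
  show "cone_spectral_radius C f \<le> cone_spectral_radius C (asymptotic_map f)"
  proof (rule cone_spectral_radius_le_approx[OF cone assms])
    fix x e assume "x \<in> interior C" "0 < (e::real)"
    then obtain t where "0 < t" "Mfun C (f (t *\<^sub>R x)) (t *\<^sub>R x) \<le> Mfun C (asymptotic_map f x) x + e"
      by (rule Mfun_rescaled_approx)
    then show "\<exists>y\<in>interior C. Mfun C (f y) y \<le> Mfun C (asymptotic_map f x) x + e"
      using interior_cone_scaleR[OF cone \<open>x \<in> interior C\<close>] by blast
  qed
  show "cone_spectral_radius C (asymptotic_map f) \<le> cone_spectral_radius C f"
    using asymptotic_map_le_rescaled[of _ 1]
    by (intro cone_spectral_radius_mono[OF cone assms]) simp
qed

end

theorem proposition4p9: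
  fixes C :: "'a::banach set" and f :: "'a \<Rightarrow> 'a"
  assumes "closed_cone C" and "regular_cone C" and "interior C \<noteq> {}"
    and "f ` interior C \<subseteq> interior C"
    and "order_preserving_on C (interior C) f"
    and "subhomogeneous_on C (interior C) f"
  shows "(\<forall>x\<in>interior C. \<exists>L. ((\<lambda>t::real. inverse t *\<^sub>R f (t *\<^sub>R x)) \<longlongrightarrow> L) at_top)
    \<and> asymptotic_map f ` interior C \<subseteq> C
    \<and> order_preserving_on C (interior C) (asymptotic_map f)
    \<and> homogeneous_on (interior C) (asymptotic_map f)
    \<and> cone_spectral_radius C f = cone_spectral_radius C (asymptotic_map f)"
proof -
  interpret order_preserving_subhomogeneous C f
    using assms(1,2,4-6) by unfold_locales
  show ?thesis
    using rescaled_converges asymptotic_map_in_cone asymptotic_map_order_preserving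
      asymptotic_map_homogeneous cone_spectral_radius_asymptotic_map[OF assms(3)]
    by blast
qed

end
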